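(* Let $P\in W^{(l)}\setminus\{0\}$ and let $(\rho_1,\sigma_1)>(\rho_2,\sigma_2)$ be consecutive elements of $\overline{\mathrm{Val}}(P)$ (no element of $\overline{\mathrm{Val}}(P)$ lies strictly between them). Let $(\rho,\sigma)\in\mathfrak V$. (1) If $(\rho_1,\sigma_1)\in\mathrm{Val}(P)$ and $(\rho_1,\sigma_1)>(\rho,\sigma)\ge(\rho_2,\sigma_2)$, then $\mathrm{Succ}_{\rho,\sigma}(P)$ is defined and equals $(\rho_1,\sigma_1)$. (2) If $(\rho_2,\sigma_2)\in\mathrm{Val}(P)$ and $(\rho_1,\sigma_1)\ge(\rho,\sigma)>(\rho_2,\sigma_2)$, then $\mathrm{Pred}_{\rho,\sigma}(P)$ is defined and equals $(\rho_2,\sigma_2)$. (3) If $(\rho_1,\sigma_1)>(\rho,\sigma)>(\rho_2,\sigma_2)$, then $\{\mathrm{st}_{\rho_1,\sigma_1}(P)\}=\mathrm{Supp}(\ell_{\rho,\sigma}(P))=\{\mathrm{en}_{\rho_2,\sigma_2}(P)\}$.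
   Context: $K$ is a field of characteristic zero, $l\in\mathbb{N}$. $W^{(l)}$ is the associative $K$-algebra with $K$-basis $\{X^{i/l}Y^j:i\in\mathbb{Z},j\in\mathbb{N}_0\}$, powers of $X$ multiplying as Laurent monomials and $[Y,X^\alpha]=\alpha X^{\alpha-1}$. $\Psi^{(l)}(X^{i/l}Y^j)=x^{i/l}y^j\in K[x^{\pm1/l},y]$; supports are sets of exponents with nonzero coefficient. $\overline{\mathfrak V}=\{(\rho,\sigma)\in\mathbb{Z}^2:\gcd(\rho,\sigma)=1,\rho+\sigma\ge0\}$, $\mathfrak V$ the subset with $\rho+\sigma>0$; $v_{\rho,\sigma}(a,b)=\rho a+\sigma b$. For $P\ne0$: $v_{\rho,\sigma}(P)=\max_{\mathrm{Supp}(P)}v_{\rho,\sigma}$; $\ell_{\rho,\sigma}(P)$ = sum of terms of $\Psi^{(l)}(P)$ attaining it. $\mathrm{st}_{\rho,\sigma}(P)$: among points $(a,b)\in\mathrm{Supp}(\ell_{\rho,\sigma}(P))$ maximizing $a-b$, the one with largest $a$; $\mathrm{en}_{\rho,\sigma}(P)$: among those maximizing $b-a$, the one with largest $b$. $\mathrm{Val}(P)=\{(\rho,\sigma)\in\mathfrak V:\#\mathrm{Supp}(\ell_{\rho,\sigma}(P))>1\}$, $\overline{\mathrm{Val}}(P)=\mathrm{Val}(P)\cup\{(1,-1),(-1,1)\}$. Total order on $\overline{\mathfrak V}$: $(1,-1)<(\rho,\sigma)<(-1,1)$ for $(\rho,\sigma)\in\mathfrak V$, and on $\mathfrak V$, $(\rho_1,\sigma_1)\le(\rho,\sigma)$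 iff $\rho_1\sigma-\sigma_1\rho\ge0$. For $(c,d)\in\frac1l\mathbb{Z}\times\mathbb{Z}$ not a multiple of $(1,1)$, $\mathrm{val}(c,d)$ is the unique $(\rho',\sigma')\in\mathfrak V$ with $\rho'c+\sigma'd=0$. For $(\rho,\sigma)\in\mathfrak V$ put $\mathrm{en}=\mathrm{en}_{\rho,\sigma}(P)$, $\mathrm{st}=\mathrm{st}_{\rho,\sigma}(P)$, $\mathrm{Valsup}=\{\mathrm{val}((a,b)-\mathrm{en}):(a,b)\in\mathrm{Supp}(P),\ v_{-1,1}(a,b)>v_{-1,1}(\mathrm{en})\}$, $\mathrm{Valinf}=\{\mathrm{val}((a,b)-\mathrm{st}):(a,b)\in\mathrm{Supp}(P),\ v_{1,-1}(a,b)>v_{1,-1}(\mathrm{st})\}$; $\mathrm{Succ}_{\rho,\sigma}(P):=\min\mathrm{Valsup}$ (defined when $\mathrm{Valsup}\ne\emptyset$) and $\mathrm{Pred}_{\rho,\sigma}(P):=\max\mathrm{Valinf}$ (defined when $\mathrm{Valinf}\ne\emptyset$). *)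

theory Defs
  imports Main "HOL.Rat"
begin

(* An element P of W^(l) is represented by its coefficient function:
   P (a, j) is the coefficient of the basis monomial X^a Y^j, where a \<in> (1/l)Z.
   Hence Psi^(l)(P) has the same coefficient function (x^a y^j). *)

definition in_W :: "nat \<Rightarrow> (rat \<times> nat \<Rightarrow> 'k::field_char_0) \<Rightarrow> bool" where
  "in_W l P \<longleftrightarrow> finite {e. P e \<noteq> 0} \<and>
     (\<forall>a j. P (a, j) \<noteq> 0 \<longrightarrow> (\<exists>i::int. a = of_int i / of_nat l))"

definition Supp :: "(rat \<times> nat \<Rightarrow> 'k::zero) \<Rightarrow> (rat \<times> rat) set" where
  "Supp P = {(a, of_nat j) | a j. P (a, j) \<noteq> 0}"

type_synonym dir = "int \<times> int"

definition Vbar :: "dir set" where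
  "Vbar = {(r, s). gcd r s = 1 \<and> r + s \<ge> 0}"

definition V :: "dir set" where
  "V = {(r, s). gcd r s = 1 \<and> r + s > 0}"

definition vval :: "dir \<Rightarrow> rat \<times> rat \<Rightarrow> rat" where
  "vval d p = of_int (fst d) * fst p + of_int (snd d) * snd p"

definition vP :: "dir \<Rightarrow> (rat \<times> nat \<Rightarrow> 'k::zero) \<Rightarrow> rat" where
  "vP d P = Max (vval d ` Supp P)"

(* Supp(ell_{rho,sigma}(P)) : the points of Supp(P) attaining v_{rho,sigma}(P) *)
definition lSupp :: "dir \<Rightarrow> (rat \<times> nat \<Rightarrow> 'k::zero) \<Rightarrow> (rat \<times> rat) set" where
  "lSupp d P = {p \<in> Supp P. vval d p = vP d P}"

definition st :: "dir \<Rightarrow> (rat \<times> nat \<Rightarrow> 'k::zero) \<Rightarrow> rat \<times> rat" where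
  "st d P = (THE p. p \<in> lSupp d P \<and>
     (\<forall>q \<in> lSupp d P. fst q - snd q \<le> fst p - snd p \<and>
        (fst q - snd q = fst p - snd p \<longrightarrow> fst q \<le> fst p)))"

definition en :: "dir \<Rightarrow> (rat \<times> nat \<Rightarrow> 'k::zero) \<Rightarrow> rat \<times> rat" where
  "en d P = (THE p. p \<in> lSupp d P \<and>
     (\<forall>q \<in> lSupp d P. snd q - fst q \<le> snd p - fst p \<and>
        (snd q - fst q = snd p - fst p \<longrightarrow> snd q \<le> snd p)))"

definition Val :: "(rat \<times> nat \<Rightarrow> 'k::zero) \<Rightarrow> dir set" where
  "Val P = {d \<in> V. card (lSupp d P) > 1}"

definition Valbar :: "(rat \<times> nat \<Rightarrow> 'k::zero) \<Rightarrow> dir set" where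
  "Valbar P = Val P \<union> {(1, -1), (-1, 1)}"

definition dir_le :: "dir \<Rightarrow> dir \<Rightarrow> bool" where
  "dir_le d e \<longleftrightarrow> d = e \<or> d = (1, -1) \<or> e = (-1, 1) \<or>
     (d \<in> V \<and> e \<in> V \<and> fst d * snd e - snd d * fst e \<ge> 0)"

definition dir_less :: "dir \<Rightarrow> dir \<Rightarrow> bool" where
  "dir_less d e \<longleftrightarrow> dir_le d e \<and> d \<noteq> e"

definition val :: "rat \<times> rat \<Rightarrow> dir" where
  "val c = (THE d. d \<in> V \<and> vval d c = 0)"

definition Valsup :: "dir \<Rightarrow> (rat \<times> nat \<Rightarrow> 'k::zero) \<Rightarrow> dir set" where
  "Valsup d P = {val (fst p - fst (en d P), snd p - snd (en d P)) | p.
      p \<in> Supp P \<and> vval (-1, 1) p > vval (-1, 1) (en d P)}"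

definition Valinf :: "dir \<Rightarrow> (rat \<times> nat \<Rightarrow> 'k::zero) \<Rightarrow> dir set" where
  "Valinf d P = {val (fst p - fst (st d P), snd p - snd (st d P)) | p.
      p \<in> Supp P \<and> vval (1, -1) p > vval (1, -1) (st d P)}"

definition Succ :: "dir \<Rightarrow> (rat \<times> nat \<Rightarrow> 'k::zero) \<Rightarrow> dir option" where
  "Succ d P = (if Valsup d P = {} then None
     else Some (THE m. m \<in> Valsup d P \<and> (\<forall>x \<in> Valsup d P. dir_le m x)))"

definition Pred :: "dir \<Rightarrow> (rat \<times> nat \<Rightarrow> 'k::zero) \<Rightarrow> dir option" where
  "Pred d P = (if Valinf d P = {} then None
     else Some (THE m. m \<in> Valinf d P \<and> (\<forall>x \<in> Valinf d P. dir_le x m)))"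

end

theory Submission
  imports Defs
begin

text \<open>
  Parametrise a direction (\<rho>, \<sigma>) \<in> V by its slope t = \<sigma> / (\<rho> + \<sigma>); this is an order
  isomorphism from V onto the rationals. As \<rho> a + \<sigma> b = (\<rho> + \<sigma>) (a + t (b - a)),
  the support of the leading form at (\<rho>, \<sigma>) is the face of Supp(P) on which the linear form
  a + t (b - a) is maximal, and Val(P) consists of the slopes at which this face is not a
  single point. Between two consecutive such breakpoints the face is a single vertex q. As t
  increases, q stays on the face exactly until the first slope at which some point p with larger
  b - a catches up with it; this slope is the next breakpoint and the slope of val(p - q), which
  is why Succ returns the next element of Val(P). Decreasing t is the mirror image under
  (a, b) \<mapsto> (b, a).
\<close>

section \<open>Faces of a finite set of points\<close>

definition slant :: "rat \<times> rat \<Rightarrow> rat" where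
  "slant p = snd p - fst p"

definition height :: "rat \<Rightarrow> rat \<times> rat \<Rightarrow> rat" where
  "height t p = fst p + t * slant p"

definition face :: "(rat \<times> rat) set \<Rightarrow> rat \<Rightarrow> (rat \<times> rat) set" where
  "face S t = {p \<in> S. \<forall>q \<in> S. height t q \<le> height t p}"

text \<open>The parameter at which p and q have equal height.\<close>
definition crossing :: "rat \<times> rat \<Rightarrow> rat \<times> rat \<Rightarrow> rat" where
  "crossing q p = - (fst p - fst q) / (slant p - slant q)"

lemma height_diff: "height s p - height s q = (fst p - fst q) + s * (slant p - slant q)"
  by (simp add: height_def algebra_simps)

lemma prod_eq_if_slant_eq: "slant p = slant q \<Longrightarrow> fst p = fst q \<Longrightarrow> p = q"
  by (simp add: slant_def prod_eq_iff)

lemma crossing_le_iff: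
  assumes "slant q < slant p"
  shows "s \<le> crossing q p \<longleftrightarrow> height s p \<le> height s q"
proof -
  have "s \<le> crossing q p \<longleftrightarrow> s * (slant p - slant q) \<le> - (fst p - fst q)"
    unfolding crossing_def using assms by (simp add: pos_le_divide_eq)
  also have "\<dots> \<longleftrightarrow> height s p \<le> height s q"
    using height_diff[of s p q] by linarith
  finally show ?thesis .
qed

lemma crossing_less_iff:
  assumes "slant q < slant p"
  shows "s < crossing q p \<longleftrightarrow> height s p < height s q"
proof -
  have "s < crossing q p \<longleftrightarrow> s * (slant p - slant q) < - (fst p - fst q)"
    unfolding crossing_def using assms by (simp add: pos_less_divide_eq)
  also have "\<dots> \<longleftrightarrow> height s p < height s q"
    using height_diff[of s p q] by linarith
  finally show ?thesis .
qed

lemma face_subset: "face S t \<subseteq> S"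
  by (auto simp: face_def)

lemma finite_face: "finite S \<Longrightarrow> finite (face S t)"
  using finite_subset[OF face_subset] .

lemma face_height_eq: "p \<in> face S t \<Longrightarrow> q \<in> face S t \<Longrightarrow> height t p = height t q"
  by (auto simp: face_def intro: antisym)

lemma face_eq_if_slant_eq:
  "p \<in> face S t \<Longrightarrow> q \<in> face S t \<Longrightarrow> slant p = slant q \<Longrightarrow> p = q"
  using face_height_eq[of p S t q] by (auto simp: height_def intro: prod_eq_if_slant_eq)

lemma face_nonempty:
  assumes "finite S" "S \<noteq> {}"
  shows "face S t \<noteq> {}"
proof -
  have "Max (height t ` S) \<in> height t ` S"
    using assms by simp
  then obtain p where "p \<in> S" "height t p = Max (height t ` S)"
    by auto
  then have "p \<in> face S t"
    using assms by (auto simp: face_def)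
  then show ?thesis
    by blast
qed

lemma face_slant_shift:
  assumes "q \<in> face S t" "q \<in> face S s" "p \<in> face S s"
  shows "0 \<le> (s - t) * (slant p - slant q)"
proof -
  have "height s p = height s q"
    using face_height_eq[OF assms(3,2)] .
  moreover have "height t p \<le> height t q"
    using assms(1,3) face_subset by (auto simp: face_def)
  ultimately show ?thesis
    using height_diff[of s p q] height_diff[of t p q] by (simp add: algebra_simps)
qed

lemma ex_top_of_face:
  assumes "finite S" "S \<noteq> {}"
  obtains q where "q \<in> face S t" "\<forall>p \<in> face S t. slant p \<le> slant q"
proof -
  have "finite (face S t)" "face S t \<noteq> {}"
    using finite_face[OF assms(1)] face_nonempty[OF assms] .
  then have "Max (slant ` face S t) \<in> slant ` face S t"
    by simp
  then obtain q where q: "q \<in> face S t" "slant q = Max (slant ` face S t)"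
    by auto
  then show thesis
    using that[OF q(1)] \<open>finite (face S t)\<close> by simp
qed

lemma ex_bottom_of_face:
  assumes "finite S" "S \<noteq> {}"
  obtains q where "q \<in> face S t" "\<forall>p \<in> face S t. slant q \<le> slant p"
proof -
  have "finite (face S t)" "face S t \<noteq> {}"
    using finite_face[OF assms(1)] face_nonempty[OF assms] .
  then have "Min (slant ` face S t) \<in> slant ` face S t"
    by simp
  then obtain q where q: "q \<in> face S t" "slant q = Min (slant ` face S t)"
    by auto
  then show thesis
    using that[OF q(1)] \<open>finite (face S t)\<close> by simp
qed

lemma card_gt_1_iff: "finite A \<Longrightarrow> 1 < card A \<longleftrightarrow> (\<exists>x \<in> A. \<exists>y \<in> A. x \<noteq> y)"
  using card_le_Suc0_iff_eq[of A] by force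

lemma crossing_gt_if_top_of_face:
  assumes q: "q \<in> face S t" and top: "\<forall>p \<in> face S t. slant p \<le> slant q"
    and p: "p \<in> S" "slant q < slant p"
  shows "t < crossing q p"
proof (rule ccontr)
  assume "\<not> t < crossing q p"
  then have "height t q \<le> height t p"
    using crossing_less_iff[OF p(2)] by simp
  then have "p \<in> face S t"
    using q p(1) by (auto simp: face_def intro: order_trans)
  then show False
    using top p(2) by auto
qed

lemma mem_face_above:
  assumes q: "q \<in> face S t" and "t \<le> s"
    and before: "\<forall>p \<in> S. slant q < slant p \<longrightarrow> s \<le> crossing q p"
  shows "q \<in> face S s"
proof -
  have "height s p \<le> height s q" if p: "p \<in> S" for p
  proof (cases "slant q < slant p")
    case True
    then show ?thesis
      using before p crossing_le_iff by blast
  next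
    case False
    have "height t p \<le> height t q"
      using q p by (simp add: face_def)
    moreover have "(s - t) * (slant p - slant q) \<le> 0"
      using False \<open>t \<le> s\<close> by (simp add: mult_nonneg_nonpos)
    ultimately show ?thesis
      using height_diff[of s p q] height_diff[of t p q] by (simp add: algebra_simps)
  qed
  then show ?thesis
    using q face_subset by (auto simp: face_def)
qed

lemma face_above_eq_singleton:
  assumes q: "q \<in> face S t" and "t < s"
    and before: "\<forall>p \<in> S. slant q < slant p \<longrightarrow> s < crossing q p"
  shows "face S s = {q}"
proof -
  have qs: "q \<in> face S s"
    using mem_face_above[OF q] assms(2) before by (auto intro: less_imp_le)
  have "p = q" if p: "p \<in> face S s" for p
  proof (rule face_eq_if_slant_eq[OF p qs])
    have "\<not> slant q < slant p"
      using before p face_subset crossing_less_iff face_height_eq[OF p qs] by fastforce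
    moreover have "0 \<le> (s - t) * (slant p - slant q)"
      using face_slant_shift[OF q qs p] .
    ultimately show "slant p = slant q"
      using \<open>t < s\<close> by (simp add: zero_le_mult_iff)
  qed
  then show ?thesis
    using qs by blast
qed

lemma first_crossing_breakpoint:
  assumes fin: "finite S" and q: "q \<in> face S t"
    and top: "\<forall>p \<in> face S t. slant p \<le> slant q"
    and p: "p \<in> S" "slant q < slant p"
  obtains m where "t < m" "1 < card (face S m)" "q \<in> face S m"
    "\<exists>p0 \<in> S. slant q < slant p0 \<and> crossing q p0 = m"
    "\<forall>p \<in> S. slant q < slant p \<longrightarrow> m \<le> crossing q p"
proof -
  let ?U = "{p \<in> S. slant q < slant p}"
  define m where "m = Min (crossing q ` ?U)"
  have "finite ?U" "p \<in> ?U"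
    using fin p by simp_all
  then have "m \<in> crossing q ` ?U"
    unfolding m_def by (intro Min_in finite_imageI) blast+
  then obtain p0 where p0: "p0 \<in> S" "slant q < slant p0" "crossing q p0 = m"
    by auto
  have least: "\<forall>p \<in> S. slant q < slant p \<longrightarrow> m \<le> crossing q p"
    unfolding m_def using \<open>finite ?U\<close> by auto
  have "t < m"
    using crossing_gt_if_top_of_face[OF q top p0(1,2)] p0(3) by simp
  have qm: "q \<in> face S m"
    using mem_face_above[OF q] \<open>t < m\<close> least by simp
  have "height m p0 = height m q"
    using crossing_le_iff[OF p0(2), of m] crossing_less_iff[OF p0(2), of m] p0(3) by simp
  then have "p0 \<in> face S m"
    using qm p0(1) by (simp add: face_def)
  moreover have "p0 \<noteq> q"
    using p0(2) by auto
  ultimately have "1 < card (face S m)"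
    using qm card_gt_1_iff[OF finite_face[OF fin]] by blast
  then show ?thesis
    using that \<open>t < m\<close> qm p0 least by blast
qed

lemma next_breakpoint:
  assumes fin: "finite S" and q: "q \<in> face S t"
    and top: "\<forall>p \<in> face S t. slant p \<le> slant q"
    and "t < T" and break: "1 < card (face S T)"
    and gap: "\<And>s. t < s \<Longrightarrow> s < T \<Longrightarrow> card (face S s) \<le> 1"
  shows "\<exists>p0 \<in> S. slant q < slant p0 \<and> crossing q p0 = T"
    and "\<forall>p \<in> S. slant q < slant p \<longrightarrow> T \<le> crossing q p"
    and "q \<in> face S T"
proof -
  obtain p where p: "p \<in> S" "slant q < slant p" "crossing q p \<le> T"
  proof (rule ccontr)
    assume "\<not> thesis"
    then have "\<forall>p \<in> S. slant q < slant p \<longrightarrow> T < crossing q p"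
      using that not_le by blast
    then have "face S T = {q}"
      by (rule face_above_eq_singleton[OF q \<open>t < T\<close>])
    then show False
      using break by simp
  qed
  obtain m where m: "t < m" "1 < card (face S m)" "q \<in> face S m"
    "\<exists>p0 \<in> S. slant q < slant p0 \<and> crossing q p0 = m"
    "\<forall>p \<in> S. slant q < slant p \<longrightarrow> m \<le> crossing q p"
    by (rule first_crossing_breakpoint[OF fin q top p(1,2)])
  have "\<not> m < T"
    using gap[OF m(1)] m(2) by linarith
  moreover have "m \<le> T"
    using m(5) p by fastforce
  ultimately have "m = T"
    by simp
  then show "\<exists>p0 \<in> S. slant q < slant p0 \<and> crossing q p0 = T"
    and "\<forall>p \<in> S. slant q < slant p \<longrightarrow> T \<le> crossing q p" and "q \<in> face S T"
    using m(3-5) by simp_all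
qed

lemma no_breakpoint_above:
  assumes fin: "finite S" and q: "q \<in> face S t"
    and top: "\<forall>p \<in> face S t. slant p \<le> slant q"
    and gap: "\<And>s. t < s \<Longrightarrow> card (face S s) \<le> 1"
  shows "\<forall>p \<in> S. slant p \<le> slant q"
proof (rule ccontr)
  assume "\<not> (\<forall>p \<in> S. slant p \<le> slant q)"
  then obtain p where "p \<in> S" "slant q < slant p"
    by (auto simp: not_le)
  then obtain m where "t < m" "1 < card (face S m)"
    using first_crossing_breakpoint[OF fin q top] by metis
  then show False
    using gap by fastforce
qed

text \<open>
  The reflection (a, b) \<mapsto> (b, a) negates slants and maps the face at t to the face at 1 - t,
  so it turns statements about the next breakpoint into statements about the previous one.
\<close>

lemma slant_swap [simp]: "slant (prod.swap p) = - slant p"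
  by (simp add: slant_def)

lemma height_swap: "height s (prod.swap p) = height (1 - s) p"
  by (simp add: height_def slant_def algebra_simps)

lemma face_swap: "face (prod.swap ` S) s = prod.swap ` face S (1 - s)"
proof -
  have swap_mem: "x \<in> prod.swap ` A \<longleftrightarrow> prod.swap x \<in> A" for x and A :: "(rat \<times> rat) set"
    by force
  have "x \<in> face (prod.swap ` S) s \<longleftrightarrow> prod.swap x \<in> face S (1 - s)" for x
    using height_swap[of s "prod.swap x"] by (auto simp: face_def swap_mem height_swap)
  then show ?thesis
    by (auto simp: swap_mem)
qed

lemma crossing_swap:
  assumes "slant p \<noteq> slant q"
  shows "crossing (prod.swap q) (prod.swap p) = 1 - crossing q p"
proof -
  have "slant p - slant q \<noteq> 0"
    using assms by simp
  then show ?thesis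
    by (simp add: crossing_def slant_def field_simps)
qed

lemma card_face_swap: "card (face (prod.swap ` S) s) = card (face S (1 - s))"
  by (simp add: face_swap card_image)

lemma prev_breakpoint:
  assumes fin: "finite S" and q: "q \<in> face S t"
    and bot: "\<forall>p \<in> face S t. slant q \<le> slant p"
    and "T < t" and break: "1 < card (face S T)"
    and gap: "\<And>s. T < s \<Longrightarrow> s < t \<Longrightarrow> card (face S s) \<le> 1"
  shows "\<exists>p0 \<in> S. slant p0 < slant q \<and> crossing q p0 = T"
    and "\<forall>p \<in> S. slant p < slant q \<longrightarrow> crossing q p \<le> T"
    and "q \<in> face S T"
proof -
  have gap': "card (face (prod.swap ` S) s) \<le> 1" if "1 - t < s" "s < 1 - T" for s
    using gap[of "1 - s"] that by (simp add: card_face_swap)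
  note mirrored = next_breakpoint[of "prod.swap ` S" "prod.swap q" "1 - t" "1 - T", OF _ _ _ _ _ gap']
  have hyps: "finite (prod.swap ` S)" "prod.swap q \<in> face (prod.swap ` S) (1 - t)"
    "\<forall>p \<in> face (prod.swap ` S) (1 - t). slant p \<le> slant (prod.swap q)"
    "1 - t < 1 - T" "1 < card (face (prod.swap ` S) (1 - T))"
    using fin q bot \<open>T < t\<close> break by (auto simp: face_swap card_image)
  obtain p0 where "p0 \<in> S" "slant (prod.swap q) < slant (prod.swap p0)"
    "crossing (prod.swap q) (prod.swap p0) = 1 - T"
    using mirrored(1)[OF hyps] by auto
  then show "\<exists>p0 \<in> S. slant p0 < slant q \<and> crossing q p0 = T"
    using crossing_swap[of p0 q] by auto
  show "\<forall>p \<in> S. slant p < slant q \<longrightarrow> crossing q p \<le> T"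
  proof (intro ballI impI)
    fix p assume "p \<in> S" "slant p < slant q"
    then show "crossing q p \<le> T"
      using mirrored(2)[OF hyps] crossing_swap[of p q] by force
  qed
  show "q \<in> face S T"
    using mirrored(3)[OF hyps] by (auto simp: face_swap inj_image_mem_iff)
qed

lemma no_breakpoint_below:
  assumes fin: "finite S" and q: "q \<in> face S t"
    and bot: "\<forall>p \<in> face S t. slant q \<le> slant p"
    and gap: "\<And>s. s < t \<Longrightarrow> card (face S s) \<le> 1"
  shows "\<forall>p \<in> S. slant q \<le> slant p"
proof -
  have "\<forall>p \<in> prod.swap ` S. slant p \<le> slant (prod.swap q)"
  proof (rule no_breakpoint_above)
    show "prod.swap q \<in> face (prod.swap ` S) (1 - t)"
      and "\<forall>p \<in> face (prod.swap ` S) (1 - t). slant p \<le> slant (prod.swap q)"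
      using q bot by (auto simp: face_swap)
    show "card (face (prod.swap ` S) s) \<le> 1" if "1 - t < s" for s
      using gap[of "1 - s"] that by (simp add: card_face_swap)
  qed (use fin in simp)
  then show ?thesis
    by simp
qed

section \<open>Directions and slopes\<close>

definition slope :: "dir \<Rightarrow> rat" where
  "slope d = of_int (snd d) / of_int (fst d + snd d)"

lemma V_sum_pos: "d \<in> V \<Longrightarrow> 0 < fst d + snd d"
  by (auto simp: V_def)

lemma vval_eq_height: "d \<in> V \<Longrightarrow> vval d p = of_int (fst d + snd d) * height (slope d) p"
  using V_sum_pos[of d] by (simp add: vval_def height_def slope_def slant_def field_simps)

lemma quotient_of_slope:
  assumes "d \<in> V"
  shows "quotient_of (slope d) = (snd d, fst d + snd d)"
proof -
  have "gcd (fst d) (snd d) = 1"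
    using assms by (auto simp: V_def)
  then have "gcd (snd d) (fst d + snd d) = 1"
    by (metis add.commute gcd.commute gcd_add2)
  moreover have "slope d = Fract (snd d) (fst d + snd d)"
    by (simp add: slope_def Fract_of_int_quotient)
  ultimately show ?thesis
    using V_sum_pos[OF assms] by (simp add: quotient_of_Fract coprime_iff_gcd_eq_1)
qed

lemma inj_on_slope: "inj_on slope V"
proof (rule inj_onI)
  fix d e assume "d \<in> V" "e \<in> V" "slope d = slope e"
  then have "(snd d, fst d + snd d) = (snd e, fst e + snd e)"
    by (metis quotient_of_slope)
  then show "d = e"
    by (simp add: prod_eq_iff)
qed

lemma slope_surj: "\<exists>d \<in> V. slope d = t"
proof -
  obtain n m where q: "quotient_of t = (n, m)"
    by fastforce
  have "gcd (m - n) n = 1"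
    using quotient_of_coprime[OF q] by (metis gcd_diff1 gcd.commute coprime_iff_gcd_eq_1)
  then have "(m - n, n) \<in> V"
    using quotient_of_denom_pos[OF q] by (simp add: V_def)
  moreover have "slope (m - n, n) = t"
    using quotient_of_div[OF q] by (simp add: slope_def)
  ultimately show ?thesis
    by blast
qed

lemma dir_le_iff_slope:
  assumes d: "d \<in> V" and e: "e \<in> V"
  shows "dir_le d e \<longleftrightarrow> slope d \<le> slope e"
proof -
  have pos: "(0::rat) < of_int (fst d + snd d)" "(0::rat) < of_int (fst e + snd e)"
    using V_sum_pos[OF d] V_sum_pos[OF e] by simp_all
  have "slope d \<le> slope e \<longleftrightarrow>
      (of_int (snd d * (fst e + snd e)) :: rat) \<le> of_int (snd e * (fst d + snd d))"
    using pos unfolding slope_def of_int_mult by (simp add: divide_le_eq le_divide_eq field_simps)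
  also have "\<dots> \<longleftrightarrow> 0 \<le> fst d * snd e - snd d * fst e"
    unfolding of_int_le_iff by (simp add: algebra_simps)
  finally show ?thesis
    using d e by (auto simp: dir_le_def V_def)
qed

lemma dir_less_iff_slope:
  assumes "d \<in> V" "e \<in> V"
  shows "dir_less d e \<longleftrightarrow> slope d < slope e"
  using dir_le_iff_slope[OF assms] inj_on_slope assms
  by (auto simp: dir_less_def less_le dest: inj_onD)

lemma dir_less_top: "e \<in> V \<Longrightarrow> dir_less e (-1, 1)"
  by (auto simp: dir_less_def dir_le_def V_def)

lemma dir_less_bot: "e \<in> V \<Longrightarrow> dir_less (1, -1) e"
  by (auto simp: dir_less_def dir_le_def V_def)

lemma dir_le_less_trans:
  assumes "dir_le a b" "dir_less b c" "b \<in> V" "c \<in> V"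
  shows "dir_less a c"
proof (cases "a \<in> V")
  case True
  then show ?thesis
    using assms by (simp add: dir_le_iff_slope dir_less_iff_slope)
next
  case False
  then have "a = (1, -1)"
    using assms(1,3) dir_less_top[OF assms(3)] by (auto simp: dir_le_def dir_less_def)
  then show ?thesis
    using dir_less_bot[OF assms(4)] by simp
qed

lemma dir_less_le_trans:
  assumes "dir_less a b" "dir_le b c" "a \<in> V" "b \<in> V"
  shows "dir_less a c"
proof (cases "c \<in> V")
  case True
  then show ?thesis
    using assms by (simp add: dir_le_iff_slope dir_less_iff_slope)
next
  case False
  then have "c = (-1, 1)"
    using assms(2,4) dir_less_bot[OF assms(4)] by (auto simp: dir_le_def dir_less_def)
  then show ?thesis
    using dir_less_top[OF assms(3)] by simp
qed

lemma val_diff: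
  assumes "slant p \<noteq> slant q"
  defines "c \<equiv> (fst p - fst q, snd p - snd q)"
  shows "val c \<in> V" and "slope (val c) = crossing q p"
proof -
  have root: "vval e c = 0 \<longleftrightarrow> slope e = crossing q p" if "e \<in> V" for e
  proof -
    have "vval e c = 0 \<longleftrightarrow> height (slope e) c = 0"
      using vval_eq_height[OF that] V_sum_pos[OF that] by simp
    also have "\<dots> \<longleftrightarrow> slope e * (slant p - slant q) = - (fst p - fst q)"
      by (auto simp: height_def slant_def c_def algebra_simps)
    also have "\<dots> \<longleftrightarrow> slope e = crossing q p"
      using assms by (auto simp: crossing_def field_simps)
    finally show ?thesis .
  qed
  obtain d where d: "d \<in> V" "slope d = crossing q p"
    using slope_surj by blast
  have "val c = d"
    unfolding val_def
  proof (rule the_equality)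
    show "d \<in> V \<and> vval d c = 0"
      using d root by simp
    show "e = d" if "e \<in> V \<and> vval e c = 0" for e
      using that root[of e] d by (metis inj_onD[OF inj_on_slope])
  qed
  then show "val c \<in> V" and "slope (val c) = crossing q p"
    using d by simp_all
qed

section \<open>Leading supports\<close>

lemma finite_Supp: "in_W l P \<Longrightarrow> finite (Supp P)"
proof -
  assume "in_W l P"
  then have "finite {e. P e \<noteq> 0}"
    by (simp add: in_W_def)
  moreover have "Supp P = (\<lambda>e. (fst e, of_nat (snd e))) ` {e. P e \<noteq> 0}"
    by (force simp: Supp_def)
  ultimately show ?thesis
    by simp
qed

lemma Supp_nonempty: "P \<noteq> (\<lambda>_. 0) \<Longrightarrow> Supp P \<noteq> {}"
  by (auto simp: Supp_def)

lemma lSupp_eq_argmax: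
  assumes "finite (Supp P)" "Supp P \<noteq> {}"
  shows "lSupp d P = {p \<in> Supp P. \<forall>q \<in> Supp P. vval d q \<le> vval d p}"
proof -
  have "vval d p = Max (vval d ` Supp P) \<longleftrightarrow> (\<forall>q \<in> Supp P. vval d q \<le> vval d p)"
    if "p \<in> Supp P" for p
    using assms that Max_eq_iff[of "vval d ` Supp P" "vval d p"] by auto
  then show ?thesis
    by (auto simp: lSupp_def vP_def)
qed

lemma lSupp_eq_face:
  assumes "finite (Supp P)" "Supp P \<noteq> {}" "d \<in> V"
  shows "lSupp d P = face (Supp P) (slope d)"
  using lSupp_eq_argmax[OF assms(1,2)] vval_eq_height[OF assms(3)] V_sum_pos[OF assms(3)]
  by (simp add: face_def)

lemma vval_top: "vval (-1, 1) p = slant p"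
  by (simp add: vval_def slant_def)

lemma vval_bot: "vval (1, -1) p = - slant p"
  by (simp add: vval_def slant_def)

lemma st_eqI:
  assumes "q \<in> lSupp d P"
    and "\<forall>p \<in> lSupp d P. slant q \<le> slant p \<and> (slant p = slant q \<longrightarrow> fst p \<le> fst q)"
  shows "st d P = q"
  unfolding st_def
proof (rule the_equality)
  show "q \<in> lSupp d P \<and> (\<forall>x \<in> lSupp d P. fst x - snd x \<le> fst q - snd q \<and>
      (fst x - snd x = fst q - snd q \<longrightarrow> fst x \<le> fst q))"
    using assms by (auto simp: slant_def)
  show "p = q" if "p \<in> lSupp d P \<and> (\<forall>x \<in> lSupp d P. fst x - snd x \<le> fst p - snd p \<and>
      (fst x - snd x = fst p - snd p \<longrightarrow> fst x \<le> fst p))" for p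
  proof -
    have a: "fst q - snd q \<le> fst p - snd p" "fst q - snd q = fst p - snd p \<longrightarrow> fst q \<le> fst p"
      using that assms(1) by blast+
    have b: "slant q \<le> slant p" "slant p = slant q \<longrightarrow> fst p \<le> fst q"
      using that assms(2) by blast+
    have "slant p = slant q"
      using a(1) b(1) by (simp add: slant_def)
    moreover from this have "fst p = fst q"
      using a(2) b(2) by (simp add: slant_def)
    ultimately show ?thesis
      by (rule prod_eq_if_slant_eq)
  qed
qed

lemma en_eqI:
  assumes "q \<in> lSupp d P"
    and "\<forall>p \<in> lSupp d P. slant p \<le> slant q \<and> (slant p = slant q \<longrightarrow> fst p \<le> fst q)"
  shows "en d P = q"
  unfolding en_def
proof (rule the_equality)
  show "q \<in> lSupp d P \<and> (\<forall>x \<in> lSupp d P. snd x - fst x \<le> snd q - fst q \<and>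
      (snd x - fst x = snd q - fst q \<longrightarrow> snd x \<le> snd q))"
    using assms by (auto simp: slant_def)
  show "p = q" if "p \<in> lSupp d P \<and> (\<forall>x \<in> lSupp d P. snd x - fst x \<le> snd p - fst p \<and>
      (snd x - fst x = snd p - fst p \<longrightarrow> snd x \<le> snd p))" for p
  proof -
    have a: "snd q - fst q \<le> snd p - fst p" "snd q - fst q = snd p - fst p \<longrightarrow> snd q \<le> snd p"
      using that assms(1) by blast+
    have b: "slant p \<le> slant q" "slant p = slant q \<longrightarrow> fst p \<le> fst q"
      using that assms(2) by blast+
    have "slant p = slant q"
      using a(1) b(1) by (simp add: slant_def)
    moreover from this have "fst p = fst q"
      using a(2) b(2) by (simp add: slant_def)
    ultimately show ?thesis
      by (rule prod_eq_if_slant_eq)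
  qed
qed

lemma st_eq_bottom_of_face:
  assumes "lSupp d P = face S s" "q \<in> face S s" "\<forall>p \<in> face S s. slant q \<le> slant p"
  shows "st d P = q"
  using assms by (intro st_eqI) (auto dest: face_eq_if_slant_eq)

lemma en_eq_top_of_face:
  assumes "lSupp d P = face S s" "q \<in> face S s" "\<forall>p \<in> face S s. slant p \<le> slant q"
  shows "en d P = q"
  using assms by (intro en_eqI) (auto dest: face_eq_if_slant_eq)

lemma Valsup_eq:
  "Valsup d P = (\<lambda>p. val (fst p - fst (en d P), snd p - snd (en d P))) `
     {p \<in> Supp P. slant (en d P) < slant p}"
  unfolding Valsup_def vval_top by blast

lemma Valinf_eq:
  "Valinf d P = (\<lambda>p. val (fst p - fst (st d P), snd p - snd (st d P))) `
     {p \<in> Supp P. slant p < slant (st d P)}"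
  unfolding Valinf_def vval_bot neg_less_iff_less by blast

lemma Succ_eqI:
  assumes e: "e \<in> Valsup d P" and sub: "Valsup d P \<subseteq> V"
    and least: "\<forall>x \<in> Valsup d P. slope e \<le> slope x"
  shows "Succ d P = Some e"
proof -
  have "(THE m. m \<in> Valsup d P \<and> (\<forall>x \<in> Valsup d P. dir_le m x)) = e"
  proof (rule the_equality)
    show "e \<in> Valsup d P \<and> (\<forall>x \<in> Valsup d P. dir_le e x)"
      using e sub least dir_le_iff_slope by blast
    show "m = e" if m: "m \<in> Valsup d P \<and> (\<forall>x \<in> Valsup d P. dir_le m x)" for m
    proof -
      have "m \<in> V" "e \<in> V"
        using m e sub by auto
      moreover from this have "slope m = slope e"
        using m e least dir_le_iff_slope by (meson antisym)
      ultimately show ?thesis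
        by (rule inj_onD[OF inj_on_slope, rotated])
    qed
  qed
  then show ?thesis
    using e by (auto simp: Succ_def)
qed

lemma Pred_eqI:
  assumes e: "e \<in> Valinf d P" and sub: "Valinf d P \<subseteq> V"
    and greatest: "\<forall>x \<in> Valinf d P. slope x \<le> slope e"
  shows "Pred d P = Some e"
proof -
  have "(THE m. m \<in> Valinf d P \<and> (\<forall>x \<in> Valinf d P. dir_le x m)) = e"
  proof (rule the_equality)
    show "e \<in> Valinf d P \<and> (\<forall>x \<in> Valinf d P. dir_le x e)"
      using e sub greatest dir_le_iff_slope by blast
    show "m = e" if m: "m \<in> Valinf d P \<and> (\<forall>x \<in> Valinf d P. dir_le x m)" for m
    proof -
      have "m \<in> V" "e \<in> V"
        using m e sub by auto
      moreover from this have "slope m = slope e"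
        using m e greatest dir_le_iff_slope by (meson antisym)
      ultimately show ?thesis
        by (rule inj_onD[OF inj_on_slope, rotated])
    qed
  qed
  then show ?thesis
    using e by (auto simp: Pred_def)
qed

lemma card_face_le_1_between:
  assumes fin: "finite (Supp P)" and ne: "Supp P \<noteq> {}"
    and gap: "\<forall>e \<in> Val P. \<not> (dir_less a e \<and> dir_less e b)"
    and between: "\<And>e. e \<in> V \<Longrightarrow> slope e = s \<Longrightarrow> dir_less a e \<and> dir_less e b"
  shows "card (face (Supp P) s) \<le> 1"
proof -
  obtain e where e: "e \<in> V" "slope e = s"
    using slope_surj by blast
  then have "e \<notin> Val P"
    using gap between by blast
  then show ?thesis
    using e lSupp_eq_face[OF fin ne e(1)] by (simp add: Val_def)
qed

lemma Succ_eq_next_Val: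
  assumes fin: "finite (Supp P)" and ne: "Supp P \<noteq> {}"
    and d: "d \<in> V" and d1: "d1 \<in> Val P" and "dir_less d d1"
    and gap: "\<forall>e \<in> Val P. \<not> (dir_less d e \<and> dir_less e d1)"
  shows "Succ d P = Some d1"
proof -
  let ?S = "Supp P"
  have d1V: "d1 \<in> V"
    using d1 by (simp add: Val_def)
  have "slope d < slope d1"
    using \<open>dir_less d d1\<close> dir_less_iff_slope[OF d d1V] by simp
  have break: "1 < card (face ?S (slope d1))"
    using d1 lSupp_eq_face[OF fin ne d1V] by (simp add: Val_def)
  have between: "card (face ?S s) \<le> 1" if "slope d < s" "s < slope d1" for s
    by (rule card_face_le_1_between[OF fin ne gap]) (use that d d1V in \<open>simp add: dir_less_iff_slope\<close>)
  obtain q where q: "q \<in> face ?S (slope d)" "\<forall>p \<in> face ?S (slope d). slant p \<le> slant q"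
    using ex_top_of_face[OF fin ne] .
  note crossings = next_breakpoint[OF fin q \<open>slope d < slope d1\<close> break between]
  have "en d P = q"
    using en_eq_top_of_face[OF lSupp_eq_face[OF fin ne d] q] .
  then have Valsup: "Valsup d P = (\<lambda>p. val (fst p - fst q, snd p - snd q)) ` {p \<in> ?S. slant q < slant p}"
    by (simp add: Valsup_eq)
  show ?thesis
  proof (rule Succ_eqI)
    obtain p0 where "p0 \<in> ?S" "slant q < slant p0" "crossing q p0 = slope d1"
      using crossings(1) by blast
    moreover from this have "val (fst p0 - fst q, snd p0 - snd q) = d1"
      using val_diff[of p0 q] d1V by (metis less_irrefl inj_onD[OF inj_on_slope])
    ultimately show "d1 \<in> Valsup d P"
      unfolding Valsup by blast
    show "Valsup d P \<subseteq> V" and "\<forall>x \<in> Valsup d P. slope d1 \<le> slope x"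
      unfolding Valsup using crossings(2) val_diff by force+
  qed
qed

lemma Pred_eq_prev_Val:
  assumes fin: "finite (Supp P)" and ne: "Supp P \<noteq> {}"
    and d: "d \<in> V" and d2: "d2 \<in> Val P" and "dir_less d2 d"
    and gap: "\<forall>e \<in> Val P. \<not> (dir_less d2 e \<and> dir_less e d)"
  shows "Pred d P = Some d2"
proof -
  let ?S = "Supp P"
  have d2V: "d2 \<in> V"
    using d2 by (simp add: Val_def)
  have "slope d2 < slope d"
    using \<open>dir_less d2 d\<close> dir_less_iff_slope[OF d2V d] by simp
  have break: "1 < card (face ?S (slope d2))"
    using d2 lSupp_eq_face[OF fin ne d2V] by (simp add: Val_def)
  have between: "card (face ?S s) \<le> 1" if "slope d2 < s" "s < slope d" for s
    by (rule card_face_le_1_between[OF fin ne gap]) (use that d d2V in \<open>simp add: dir_less_iff_slope\<close>)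
  obtain q where q: "q \<in> face ?S (slope d)" "\<forall>p \<in> face ?S (slope d). slant q \<le> slant p"
    using ex_bottom_of_face[OF fin ne] .
  note crossings = prev_breakpoint[OF fin q \<open>slope d2 < slope d\<close> break between]
  have "st d P = q"
    using st_eq_bottom_of_face[OF lSupp_eq_face[OF fin ne d] q] .
  then have Valinf: "Valinf d P = (\<lambda>p. val (fst p - fst q, snd p - snd q)) ` {p \<in> ?S. slant p < slant q}"
    by (simp add: Valinf_eq)
  show ?thesis
  proof (rule Pred_eqI)
    obtain p0 where "p0 \<in> ?S" "slant p0 < slant q" "crossing q p0 = slope d2"
      using crossings(1) by blast
    moreover from this have "val (fst p0 - fst q, snd p0 - snd q) = d2"
      using val_diff[of p0 q] d2V by (metis less_irrefl inj_onD[OF inj_on_slope])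
    ultimately show "d2 \<in> Valinf d P"
      unfolding Valinf by blast
    show "Valinf d P \<subseteq> V" and "\<forall>x \<in> Valinf d P. slope x \<le> slope d2"
      unfolding Valinf using crossings(2) val_diff by force+
  qed
qed

lemma st_top_eq:
  assumes fin: "finite (Supp P)" and ne: "Supp P \<noteq> {}"
    and q: "q \<in> face (Supp P) t" and top: "\<forall>p \<in> Supp P. slant p \<le> slant q"
  shows "st (-1, 1) P = q"
proof (rule st_eqI)
  have lSupp: "lSupp (-1, 1) P = {p \<in> Supp P. \<forall>x \<in> Supp P. slant x \<le> slant p}"
    using lSupp_eq_argmax[OF fin ne] by (simp add: vval_top)
  show "q \<in> lSupp (-1, 1) P"
    using q top face_subset lSupp by blast
  show "\<forall>p \<in> lSupp (-1, 1) P. slant q \<le> slant p \<and> (slant p = slant q \<longrightarrow> fst p \<le> fst q)"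
    using q top face_subset by (auto simp: lSupp face_def height_def intro: antisym)
qed

lemma en_bottom_eq:
  assumes fin: "finite (Supp P)" and ne: "Supp P \<noteq> {}"
    and q: "q \<in> face (Supp P) t" and bot: "\<forall>p \<in> Supp P. slant q \<le> slant p"
  shows "en (1, -1) P = q"
proof (rule en_eqI)
  have lSupp: "lSupp (1, -1) P = {p \<in> Supp P. \<forall>x \<in> Supp P. slant p \<le> slant x}"
    using lSupp_eq_argmax[OF fin ne] by (simp add: vval_bot)
  show "q \<in> lSupp (1, -1) P"
    using q bot face_subset lSupp by blast
  show "\<forall>p \<in> lSupp (1, -1) P. slant p \<le> slant q \<and> (slant p = slant q \<longrightarrow> fst p \<le> fst q)"
    using q bot face_subset by (auto simp: lSupp face_def height_def intro: antisym)
qed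

lemma st_next_eq:
  assumes fin: "finite (Supp P)" and ne: "Supp P \<noteq> {}"
    and d: "d \<in> V" and q: "lSupp d P = {q}"
    and d1: "d1 = (-1, 1) \<or> d1 \<in> Val P" and "dir_less d d1"
    and gap: "\<forall>e \<in> Val P. \<not> (dir_less d e \<and> dir_less e d1)"
  shows "st d1 P = q"
proof -
  let ?S = "Supp P"
  have "face ?S (slope d) = {q}"
    using q lSupp_eq_face[OF fin ne d] by simp
  then have q_top: "q \<in> face ?S (slope d)" "\<forall>p \<in> face ?S (slope d). slant p \<le> slant q"
    by simp_all
  from d1 show ?thesis
  proof
    assume top: "d1 = (-1, 1)"
    have "card (face ?S s) \<le> 1" if "slope d < s" for s
      by (rule card_face_le_1_between[OF fin ne gap])
        (use that d top dir_less_top in \<open>simp add: dir_less_iff_slope\<close>)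
    then show "st d1 P = q"
      using st_top_eq[OF fin ne q_top(1) no_breakpoint_above[OF fin q_top]] top by simp
  next
    assume d1: "d1 \<in> Val P"
    have d1V: "d1 \<in> V"
      using d1 by (simp add: Val_def)
    have "slope d < slope d1"
      using \<open>dir_less d d1\<close> dir_less_iff_slope[OF d d1V] by simp
    have break: "1 < card (face ?S (slope d1))"
      using d1 lSupp_eq_face[OF fin ne d1V] by (simp add: Val_def)
    have between: "card (face ?S s) \<le> 1" if "slope d < s" "s < slope d1" for s
      by (rule card_face_le_1_between[OF fin ne gap]) (use that d d1V in \<open>simp add: dir_less_iff_slope\<close>)
    have q1: "q \<in> face ?S (slope d1)"
      using next_breakpoint(3)[OF fin q_top \<open>slope d < slope d1\<close> break between] .
    have "\<forall>p \<in> face ?S (slope d1). slant q \<le> slant p"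
      using face_slant_shift[OF q_top(1) q1] \<open>slope d < slope d1\<close> by (simp add: zero_le_mult_iff)
    then show "st d1 P = q"
      using st_eq_bottom_of_face[OF lSupp_eq_face[OF fin ne d1V] q1] by simp
  qed
qed

lemma en_prev_eq:
  assumes fin: "finite (Supp P)" and ne: "Supp P \<noteq> {}"
    and d: "d \<in> V" and q: "lSupp d P = {q}"
    and d2: "d2 = (1, -1) \<or> d2 \<in> Val P" and "dir_less d2 d"
    and gap: "\<forall>e \<in> Val P. \<not> (dir_less d2 e \<and> dir_less e d)"
  shows "en d2 P = q"
proof -
  let ?S = "Supp P"
  have "face ?S (slope d) = {q}"
    using q lSupp_eq_face[OF fin ne d] by simp
  then have q_bot: "q \<in> face ?S (slope d)" "\<forall>p \<in> face ?S (slope d). slant q \<le> slant p"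
    by simp_all
  from d2 show ?thesis
  proof
    assume bot: "d2 = (1, -1)"
    have "card (face ?S s) \<le> 1" if "s < slope d" for s
      by (rule card_face_le_1_between[OF fin ne gap])
        (use that d bot dir_less_bot in \<open>simp add: dir_less_iff_slope\<close>)
    then show "en d2 P = q"
      using en_bottom_eq[OF fin ne q_bot(1) no_breakpoint_below[OF fin q_bot]] bot by simp
  next
    assume d2: "d2 \<in> Val P"
    have d2V: "d2 \<in> V"
      using d2 by (simp add: Val_def)
    have "slope d2 < slope d"
      using \<open>dir_less d2 d\<close> dir_less_iff_slope[OF d2V d] by simp
    have break: "1 < card (face ?S (slope d2))"
      using d2 lSupp_eq_face[OF fin ne d2V] by (simp add: Val_def)
    have between: "card (face ?S s) \<le> 1" if "slope d2 < s" "s < slope d" for s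
      by (rule card_face_le_1_between[OF fin ne gap]) (use that d d2V in \<open>simp add: dir_less_iff_slope\<close>)
    have q2: "q \<in> face ?S (slope d2)"
      using prev_breakpoint(3)[OF fin q_bot \<open>slope d2 < slope d\<close> break between] .
    have "\<forall>p \<in> face ?S (slope d2). slant p \<le> slant q"
      using face_slant_shift[OF q_bot(1) q2] \<open>slope d2 < slope d\<close> by (simp add: zero_le_mult_iff)
    then show "en d2 P = q"
      using en_eq_top_of_face[OF lSupp_eq_face[OF fin ne d2V] q2] by simp
  qed
qed

lemma lSupp_singleton_if_not_Val:
  assumes "finite (Supp P)" "Supp P \<noteq> {}" "d \<in> V" "d \<notin> Val P"
  obtains q where "lSupp d P = {q}"
proof -
  have face: "lSupp d P = face (Supp P) (slope d)"
    by (rule lSupp_eq_face[OF assms(1-3)])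
  then obtain q where q: "q \<in> lSupp d P"
    using face_nonempty[OF assms(1,2)] by blast
  have "finite (lSupp d P)"
    using face finite_face[OF assms(1)] by simp
  moreover have "card (lSupp d P) \<le> Suc 0"
    using assms(3,4) by (simp add: Val_def)
  ultimately have "lSupp d P = {q}"
    using q card_le_Suc0_iff_eq by blast
  then show thesis
    by (rule that)
qed

lemma Val_gap_narrow_left:
  assumes "\<forall>e \<in> Val P. \<not> (dir_less a e \<and> dir_less e b)" "dir_le a a'" "a' \<in> V"
  shows "\<forall>e \<in> Val P. \<not> (dir_less a' e \<and> dir_less e b)"
  using assms dir_le_less_trans[OF assms(2) _ assms(3)] by (auto simp: Val_def)

lemma Val_gap_narrow_right:
  assumes "\<forall>e \<in> Val P. \<not> (dir_less a e \<and> dir_less e b)" "dir_le b' b" "b' \<in> V"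
  shows "\<forall>e \<in> Val P. \<not> (dir_less a e \<and> dir_less e b')"
  using assms dir_less_le_trans[OF _ assms(2) _ assms(3)] by (auto simp: Val_def)

theorem proposition2p23:
  fixes l :: nat and P :: "rat \<times> nat \<Rightarrow> 'k::field_char_0"
    and d1 d2 d :: dir
  assumes "l \<ge> 1"
    and "in_W l P" and "P \<noteq> (\<lambda>_. 0)"
    and "d1 \<in> Valbar P" and "d2 \<in> Valbar P" and "dir_less d2 d1"
    and "\<not> (\<exists>e \<in> Valbar P. dir_less d2 e \<and> dir_less e d1)"
    and "d \<in> V"
  shows "(d1 \<in> Val P \<and> dir_less d d1 \<and> dir_le d2 d \<longrightarrow> Succ d P = Some d1)
       \<and> (d2 \<in> Val P \<and> dir_le d d1 \<and> dir_less d2 d \<longrightarrow> Pred d P = Some d2)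
       \<and> (dir_less d d1 \<and> dir_less d2 d \<longrightarrow>
            {st d1 P} = lSupp d P \<and> lSupp d P = {en d2 P})"
proof -
  have fin: "finite (Supp P)" and ne: "Supp P \<noteq> {}"
    using finite_Supp[OF assms(2)] Supp_nonempty[OF assms(3)] .
  have gap: "\<forall>e \<in> Val P. \<not> (dir_less d2 e \<and> dir_less e d1)"
    using assms(7) by (auto simp: Valbar_def)
  have d1: "d1 = (-1, 1) \<or> d1 \<in> Val P" and d2: "d2 = (1, -1) \<or> d2 \<in> Val P"
    using assms(4-6) by (auto simp: Valbar_def dir_less_def dir_le_def V_def)
  have "d1 \<in> Val P \<and> dir_less d d1 \<and> dir_le d2 d \<longrightarrow> Succ d P = Some d1"
    using Succ_eq_next_Val[OF fin ne assms(8)] Val_gap_narrow_left[OF gap _ assms(8)] by blast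
  moreover have "d2 \<in> Val P \<and> dir_le d d1 \<and> dir_less d2 d \<longrightarrow> Pred d P = Some d2"
    using Pred_eq_prev_Val[OF fin ne assms(8)] Val_gap_narrow_right[OF gap _ assms(8)] by blast
  moreover have "{st d1 P} = lSupp d P \<and> lSupp d P = {en d2 P}"
    if dd1: "dir_less d d1" and d2d: "dir_less d2 d"
  proof -
    have "d \<notin> Val P"
      using gap dd1 d2d by blast
    then obtain q where q: "lSupp d P = {q}"
      using lSupp_singleton_if_not_Val[OF fin ne assms(8)] by blast
    have "st d1 P = q" and "en d2 P = q"
      using st_next_eq[OF fin ne assms(8) q d1 dd1] en_prev_eq[OF fin ne assms(8) q d2 d2d]
        Val_gap_narrow_left[OF gap _ assms(8)] Val_gap_narrow_right[OF gap _ assms(8)]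
        dd1 d2d by (simp_all add: dir_less_def)
    then show ?thesis
      using q by simp
  qed
  ultimately show ?thesis
    by blast
qed

end
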